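(* Let $\mathbb D$ be a skew field, $\sigma$ an automorphism of $\mathbb D$, $\delta$ a $\sigma$-derivation, and $R=\mathbb D[x;\sigma,\delta]$. If $f\in R$ is a bounded polynomial of positive degree, then $f$ is irreducible if and only if $\operatorname{End}_R(R/Rf)$ is a skew field.
   Context: $\mathbb D[x;\sigma,\delta]$ is the ring which is a free left $\mathbb D$-module with basis $\{x^n:n\ge0\}$ with $x^nx^m=x^{n+m}$ and $xa=\sigma(a)x+\delta(a)$, where $\delta$ is additive with $\delta(ab)=\sigma(a)\delta(b)+\delta(a)b$. A polynomial $f$ of positive degree is irreducible if $f=ab$ implies $a\in\mathbb D$ or $b\in\mathbb D$. $f$ is bounded if the annihilator $\{r\in R: r(R/Rf)=0\}$ of the left module $R/Rf$ is nonzero. *)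

theory Defs
  imports "HOL-Algebra.Subrings"
begin

definition skew_subfield :: "('a, 'b) ring_scheme \<Rightarrow> 'a set \<Rightarrow> bool" where
  "skew_subfield R D \<longleftrightarrow> subring D R \<and> \<one>\<^bsub>R\<^esub> \<noteq> \<zero>\<^bsub>R\<^esub> \<and>
     (\<forall>a\<in>D - {\<zero>\<^bsub>R\<^esub>}. \<exists>b\<in>D. a \<otimes>\<^bsub>R\<^esub> b = \<one>\<^bsub>R\<^esub> \<and> b \<otimes>\<^bsub>R\<^esub> a = \<one>\<^bsub>R\<^esub>)"

definition is_automorphism :: "('a, 'b) ring_scheme \<Rightarrow> 'a set \<Rightarrow> ('a \<Rightarrow> 'a) \<Rightarrow> bool" where
  "is_automorphism R D \<sigma> \<longleftrightarrow> bij_betw \<sigma> D D \<and> \<sigma> \<one>\<^bsub>R\<^esub> = \<one>\<^bsub>R\<^esub> \<and>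
     (\<forall>a\<in>D. \<forall>b\<in>D. \<sigma> (a \<oplus>\<^bsub>R\<^esub> b) = \<sigma> a \<oplus>\<^bsub>R\<^esub> \<sigma> b \<and>
                      \<sigma> (a \<otimes>\<^bsub>R\<^esub> b) = \<sigma> a \<otimes>\<^bsub>R\<^esub> \<sigma> b)"

definition is_sigma_derivation :: "('a, 'b) ring_scheme \<Rightarrow> 'a set \<Rightarrow> ('a \<Rightarrow> 'a) \<Rightarrow> ('a \<Rightarrow> 'a) \<Rightarrow> bool" where
  "is_sigma_derivation R D \<sigma> \<delta> \<longleftrightarrow> \<delta> ` D \<subseteq> D \<and>
     (\<forall>a\<in>D. \<forall>b\<in>D. \<delta> (a \<oplus>\<^bsub>R\<^esub> b) = \<delta> a \<oplus>\<^bsub>R\<^esub> \<delta> b \<and>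
        \<delta> (a \<otimes>\<^bsub>R\<^esub> b) = (\<sigma> a \<otimes>\<^bsub>R\<^esub> \<delta> b) \<oplus>\<^bsub>R\<^esub> (\<delta> a \<otimes>\<^bsub>R\<^esub> b))"

definition coeff_rep :: "('a, 'b) ring_scheme \<Rightarrow> 'a set \<Rightarrow> 'a \<Rightarrow> (nat \<Rightarrow> 'a) \<Rightarrow> 'a \<Rightarrow> bool" where
  "coeff_rep R D x c r \<longleftrightarrow> (\<forall>n. c n \<in> D) \<and>
     (\<exists>N. (\<forall>n>N. c n = \<zero>\<^bsub>R\<^esub>) \<and> r = (\<Oplus>\<^bsub>R\<^esub>i\<in>{..N}. c i \<otimes>\<^bsub>R\<^esub> (x [^]\<^bsub>R\<^esub> i)))"

text \<open>R is (an isomorphic copy of) the Ore extension D[x;sigma,delta]: R is a ring containing the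
  skew field D and x, R is a free left D-module with basis x^n (n >= 0), and x a = sigma(a) x + delta(a).\<close>
definition is_ore_extension ::
  "('a, 'b) ring_scheme \<Rightarrow> 'a set \<Rightarrow> ('a \<Rightarrow> 'a) \<Rightarrow> ('a \<Rightarrow> 'a) \<Rightarrow> 'a \<Rightarrow> bool" where
  "is_ore_extension R D \<sigma> \<delta> x \<longleftrightarrow> ring R \<and> skew_subfield R D \<and> x \<in> carrier R \<and>
     (\<forall>r\<in>carrier R. \<exists>!c. coeff_rep R D x c r) \<and>
     (\<forall>a\<in>D. x \<otimes>\<^bsub>R\<^esub> a = (\<sigma> a \<otimes>\<^bsub>R\<^esub> x) \<oplus>\<^bsub>R\<^esub> \<delta> a)"

definition ore_coeff :: "('a, 'b) ring_scheme \<Rightarrow> 'a set \<Rightarrow> 'a \<Rightarrow> 'a \<Rightarrow> nat \<Rightarrow> 'a" where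
  "ore_coeff R D x r = (THE c. coeff_rep R D x c r)"

definition ore_degree :: "('a, 'b) ring_scheme \<Rightarrow> 'a set \<Rightarrow> 'a \<Rightarrow> 'a \<Rightarrow> nat" where
  "ore_degree R D x r = (if r = \<zero>\<^bsub>R\<^esub> then 0 else GREATEST n. ore_coeff R D x r n \<noteq> \<zero>\<^bsub>R\<^esub>)"

definition ore_irreducible :: "('a, 'b) ring_scheme \<Rightarrow> 'a set \<Rightarrow> 'a \<Rightarrow> bool" where
  "ore_irreducible R D f \<longleftrightarrow>
     (\<forall>a\<in>carrier R. \<forall>b\<in>carrier R. f = a \<otimes>\<^bsub>R\<^esub> b \<longrightarrow> a \<in> D \<or> b \<in> D)"

definition lcoset :: "('a, 'b) ring_scheme \<Rightarrow> 'a \<Rightarrow> 'a \<Rightarrow> 'a set" where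
  "lcoset R f r = {r \<oplus>\<^bsub>R\<^esub> (s \<otimes>\<^bsub>R\<^esub> f) | s. s \<in> carrier R}"

definition quot_mod :: "('a, 'b) ring_scheme \<Rightarrow> 'a \<Rightarrow> 'a set set" where
  "quot_mod R f = lcoset R f ` carrier R"

definition annihilator :: "('a, 'b) ring_scheme \<Rightarrow> 'a \<Rightarrow> 'a set" where
  "annihilator R f = {r \<in> carrier R. \<forall>s\<in>carrier R. \<exists>t\<in>carrier R. r \<otimes>\<^bsub>R\<^esub> s = t \<otimes>\<^bsub>R\<^esub> f}"

definition bounded :: "('a, 'b) ring_scheme \<Rightarrow> 'a \<Rightarrow> bool" where
  "bounded R f \<longleftrightarrow> annihilator R f \<noteq> {\<zero>\<^bsub>R\<^esub>}"

definition module_endos :: "('a, 'b) ring_scheme \<Rightarrow> 'a \<Rightarrow> ('a set \<Rightarrow> 'a set) set" where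
  "module_endos R f = {\<phi>. \<phi> \<in> extensional (quot_mod R f) \<and> \<phi> \<in> quot_mod R f \<rightarrow> quot_mod R f \<and>
      (\<forall>a\<in>carrier R. \<forall>r\<in>carrier R. \<forall>r'\<in>carrier R. \<forall>s\<in>carrier R. \<forall>s'\<in>carrier R.
         \<phi> (lcoset R f r) = lcoset R f s \<longrightarrow> \<phi> (lcoset R f r') = lcoset R f s' \<longrightarrow>
         \<phi> (lcoset R f ((a \<otimes>\<^bsub>R\<^esub> r) \<oplus>\<^bsub>R\<^esub> r')) = lcoset R f ((a \<otimes>\<^bsub>R\<^esub> s) \<oplus>\<^bsub>R\<^esub> s'))}"

definition End_ring :: "('a, 'b) ring_scheme \<Rightarrow> 'a \<Rightarrow> ('a set \<Rightarrow> 'a set) ring" where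
  "End_ring R f = \<lparr> carrier = module_endos R f,
      mult = (\<lambda>\<phi> \<psi>. restrict (\<phi> \<circ> \<psi>) (quot_mod R f)),
      one = restrict (\<lambda>A. A) (quot_mod R f),
      zero = restrict (\<lambda>A. lcoset R f \<zero>\<^bsub>R\<^esub>) (quot_mod R f),
      add = (\<lambda>\<phi> \<psi>. restrict (\<lambda>A. {u \<oplus>\<^bsub>R\<^esub> v | u v. u \<in> \<phi> A \<and> v \<in> \<psi> A}) (quot_mod R f)) \<rparr>"

definition skew_field :: "('c, 'd) ring_scheme \<Rightarrow> bool" where
  "skew_field E \<longleftrightarrow> ring E \<and> \<one>\<^bsub>E\<^esub> \<noteq> \<zero>\<^bsub>E\<^esub> \<and> carrier E - {\<zero>\<^bsub>E\<^esub>} \<subseteq> Units E"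

end

theory Submission
  imports Defs
begin

text \<open>For any ring \<open>R\<close>, the endomorphisms of \<open>R/Rf\<close> are the right multiplications by
  elements \<open>u\<close> of the idealizer \<open>{u. f u \<in> Rf}\<close>, and such a map is zero iff \<open>u \<in> Rf\<close>.
  In \<open>D[x;\<sigma>,\<delta>]\<close> there is division with remainder on both sides, so left ideals are principal.
  If \<open>f\<close> is irreducible, \<open>Rf\<close> is therefore a maximal left ideal; for \<open>u \<notin> Rf\<close> this gives
  \<open>(Rf : u) = Rf\<close> and \<open>Rf + Ru = R\<close>, i.e.\ right multiplication by \<open>u\<close> is bijective.
  Conversely let \<open>f = a b\<close> with \<open>a, b\<close> of positive degree. Boundedness provides a nonzero
  element \<open>g\<close> of least degree in the two-sided annihilator ideal of \<open>R/Rf\<close>; it satisfies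
  \<open>R g \<subseteq> g R\<close>, and writing \<open>g = c b\<close> (as \<open>g \<in> Rf\<close>) one gets \<open>g = b q\<close>. Since \<open>q\<close> has
  smaller degree than \<open>g\<close>, some \<open>v = q s\<close> lies outside \<open>Rf\<close> while \<open>b v = g s \<in> Rf\<close>: right
  multiplication by \<open>v\<close> is a nonzero endomorphism killing the class of \<open>b \<notin> Rf\<close>, so
  \<open>End(R/Rf)\<close> is not a skew field.\<close>

context ring
begin

lemma zero_in_cgenideal [simp]: "a \<in> carrier R \<Longrightarrow> \<zero> \<in> PIdl a"
  unfolding cgenideal_def by (auto intro!: exI[of _ \<zero>])

lemma cgenideal_add:
  assumes a: "a \<in> carrier R" and "r \<in> PIdl a" "s \<in> PIdl a"
  shows "r \<oplus> s \<in> PIdl a"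
proof -
  obtain t t' where t: "t \<in> carrier R" "t' \<in> carrier R" "r = t \<otimes> a" "s = t' \<otimes> a"
    using assms unfolding cgenideal_def by blast
  then have "r \<oplus> s = (t \<oplus> t') \<otimes> a" using a by (simp add: l_distr)
  then show ?thesis using t unfolding cgenideal_def by blast
qed

lemma cgenideal_uminus:
  assumes a: "a \<in> carrier R" and "r \<in> PIdl a"
  shows "\<ominus> r \<in> PIdl a"
proof -
  obtain t where t: "t \<in> carrier R" "r = t \<otimes> a" using assms unfolding cgenideal_def by blast
  then have "\<ominus> r = (\<ominus> t) \<otimes> a" using a by (simp add: l_minus)
  then show ?thesis using t unfolding cgenideal_def by blast
qed

lemma cgenideal_minus: "a \<in> carrier R \<Longrightarrow> r \<in> PIdl a \<Longrightarrow> s \<in> PIdl a \<Longrightarrow> r \<ominus> s \<in> PIdl a"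
  by (simp add: minus_eq cgenideal_add cgenideal_uminus)

lemma cgenideal_lmult:
  assumes a: "a \<in> carrier R" and c: "c \<in> carrier R" and "r \<in> PIdl a"
  shows "c \<otimes> r \<in> PIdl a"
proof -
  obtain t where t: "t \<in> carrier R" "r = t \<otimes> a" using assms unfolding cgenideal_def by blast
  then have "c \<otimes> r = (c \<otimes> t) \<otimes> a" using a c by (simp add: m_assoc)
  then show ?thesis using t c unfolding cgenideal_def by blast
qed

lemma mult_in_cgenideal: "a \<in> carrier R \<Longrightarrow> c \<in> carrier R \<Longrightarrow> c \<otimes> a \<in> PIdl a"
  unfolding cgenideal_def by blast

lemma cgenideal_subset:
  assumes b: "b \<in> carrier R" and ab: "a \<in> PIdl b"
  shows "PIdl a \<subseteq> PIdl b"
proof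
  fix r assume "r \<in> PIdl a"
  then obtain t where "t \<in> carrier R" "r = t \<otimes> a" unfolding cgenideal_def by blast
  then show "r \<in> PIdl b" using cgenideal_lmult[OF b _ ab] by simp
qed

definition left_ideal :: "'a set \<Rightarrow> bool" where
  "left_ideal S \<longleftrightarrow> S \<subseteq> carrier R \<and> \<zero> \<in> S \<and> (\<forall>a\<in>S. \<forall>b\<in>S. a \<ominus> b \<in> S) \<and>
     (\<forall>c\<in>carrier R. \<forall>a\<in>S. c \<otimes> a \<in> S)"

lemma left_ideal_colon:
  assumes a: "a \<in> carrier R" and u: "u \<in> carrier R"
  shows "left_ideal {r \<in> carrier R. r \<otimes> u \<in> PIdl a}"
  unfolding left_ideal_def
proof (intro conjI ballI)
  fix r s assume "r \<in> {r \<in> carrier R. r \<otimes> u \<in> PIdl a}" "s \<in> {r \<in> carrier R. r \<otimes> u \<in> PIdl a}"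
  then show "r \<ominus> s \<in> {r \<in> carrier R. r \<otimes> u \<in> PIdl a}"
    using u cgenideal_minus[OF a] by (simp add: minus_eq l_distr l_minus)
next
  fix c r assume "c \<in> carrier R" "r \<in> {r \<in> carrier R. r \<otimes> u \<in> PIdl a}"
  then show "c \<otimes> r \<in> {r \<in> carrier R. r \<otimes> u \<in> PIdl a}"
    using u cgenideal_lmult[OF a] by (simp add: m_assoc)
qed (use a u in auto)

lemma left_ideal_plus_cyclic:
  assumes a: "a \<in> carrier R" and u: "u \<in> carrier R"
  shows "left_ideal {r \<in> carrier R. \<exists>p\<in>carrier R. r \<ominus> p \<otimes> u \<in> PIdl a}"
    (is "left_ideal ?S")
  unfolding left_ideal_def
proof (intro conjI ballI)
  show "\<zero> \<in> ?S" using a u by (auto intro!: bexI[of _ \<zero>] simp: minus_eq)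
next
  fix r s assume "r \<in> ?S" "s \<in> ?S"
  then obtain p q where pq: "r \<in> carrier R" "s \<in> carrier R" "p \<in> carrier R" "q \<in> carrier R"
    "r \<ominus> p \<otimes> u \<in> PIdl a" "s \<ominus> q \<otimes> u \<in> PIdl a" by blast
  have "(r \<ominus> s) \<ominus> (p \<ominus> q) \<otimes> u = (r \<ominus> p \<otimes> u) \<ominus> (s \<ominus> q \<otimes> u)"
    using pq u by (simp add: minus_eq l_distr l_minus minus_add a_ac)
  then show "r \<ominus> s \<in> ?S" using pq cgenideal_minus[OF a pq(5,6)] by (auto intro!: bexI[of _ "p \<ominus> q"])
next
  fix c r assume c: "c \<in> carrier R" and "r \<in> ?S"
  then obtain p where p: "r \<in> carrier R" "p \<in> carrier R" "r \<ominus> p \<otimes> u \<in> PIdl a" by blast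
  have "c \<otimes> r \<ominus> (c \<otimes> p) \<otimes> u = c \<otimes> (r \<ominus> p \<otimes> u)"
    using c p u by (simp add: minus_eq r_distr r_minus m_assoc)
  then show "c \<otimes> r \<in> ?S" using c p cgenideal_lmult[OF a c p(3)] by (auto intro!: bexI[of _ "c \<otimes> p"])
qed auto

end

locale cyclic_module = ring R for R (structure) +
  fixes f :: 'a
  assumes f_closed: "f \<in> carrier R"
begin

abbreviation cls :: "'a \<Rightarrow> 'a set" where
  "cls r \<equiv> lcoset R f r"

abbreviation E :: "('a set \<Rightarrow> 'a set) ring" where
  "E \<equiv> End_ring R f"

lemma lcoset_eq_iff:
  assumes r: "r \<in> carrier R" and r': "r' \<in> carrier R"
  shows "cls r = cls r' \<longleftrightarrow> r \<ominus> r' \<in> PIdl f"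
proof
  assume "cls r = cls r'"
  moreover have "r \<in> cls r" unfolding lcoset_def using r f_closed by (auto intro!: exI[of _ \<zero>])
  ultimately obtain s where s: "s \<in> carrier R" "r = r' \<oplus> s \<otimes> f" unfolding lcoset_def by auto
  then have "r \<ominus> r' = s \<otimes> f" using r' f_closed by (simp add: minus_eq a_ac r_neg r_neg2)
  then show "r \<ominus> r' \<in> PIdl f" using s mult_in_cgenideal f_closed by simp
next
  assume "r \<ominus> r' \<in> PIdl f"
  then obtain t where t: "t \<in> carrier R" "r \<ominus> r' = t \<otimes> f" unfolding cgenideal_def by auto
  then have rt: "r = r' \<oplus> t \<otimes> f" using r r' f_closed
    by (metis add.inv_solve_right' add.m_comm m_closed minus_eq)
  show "cls r = cls r'"
  proof (intro equalityI subsetI)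
    fix y assume "y \<in> cls r"
    then obtain s where s: "s \<in> carrier R" "y = r \<oplus> s \<otimes> f" unfolding lcoset_def by blast
    then have "y = r' \<oplus> (t \<oplus> s) \<otimes> f" using t rt r' f_closed by (simp add: l_distr a_assoc)
    then show "y \<in> cls r'" unfolding lcoset_def using add.m_closed[OF t(1) s(1)] by blast
  next
    fix y assume "y \<in> cls r'"
    then obtain s where s: "s \<in> carrier R" "y = r' \<oplus> s \<otimes> f" unfolding lcoset_def by blast
    then have "y = r \<oplus> (\<ominus> t \<oplus> s) \<otimes> f"
      using t rt r' f_closed by (simp add: l_distr a_assoc l_minus r_neg2)
    then show "y \<in> cls r" unfolding lcoset_def using add.m_closed[OF _ s(1), of "\<ominus> t"] t by blast
  qed
qed

lemma lcoset_eq_zero_iff: "r \<in> carrier R \<Longrightarrow> cls r = cls \<zero> \<longleftrightarrow> r \<in> PIdl f"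
  using lcoset_eq_iff[of r \<zero>] by (simp add: minus_eq)

lemma quot_mod_iff: "A \<in> quot_mod R f \<longleftrightarrow> (\<exists>r\<in>carrier R. A = cls r)"
  unfolding quot_mod_def by auto

lemma lcoset_in_quot_mod [simp]: "r \<in> carrier R \<Longrightarrow> cls r \<in> quot_mod R f"
  unfolding quot_mod_def by auto

lemma lcoset_sum:
  assumes "r \<in> carrier R" "s \<in> carrier R"
  shows "{u \<oplus> v | u v. u \<in> cls r \<and> v \<in> cls s} = cls (r \<oplus> s)"
proof (intro equalityI subsetI)
  fix y assume "y \<in> {u \<oplus> v | u v. u \<in> cls r \<and> v \<in> cls s}"
  then obtain s1 s2 where h: "s1 \<in> carrier R" "s2 \<in> carrier R" "y = (r \<oplus> s1 \<otimes> f) \<oplus> (s \<oplus> s2 \<otimes> f)"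
    unfolding lcoset_def by auto
  then have "y = (r \<oplus> s) \<oplus> (s1 \<oplus> s2) \<otimes> f" using assms f_closed by (simp add: l_distr a_ac)
  then show "y \<in> cls (r \<oplus> s)" unfolding lcoset_def using h by auto
next
  fix y assume "y \<in> cls (r \<oplus> s)"
  then obtain t where h: "t \<in> carrier R" "y = (r \<oplus> s) \<oplus> t \<otimes> f" unfolding lcoset_def by auto
  then have "y = (r \<oplus> t \<otimes> f) \<oplus> (s \<oplus> \<zero> \<otimes> f)" using assms f_closed by (simp add: a_ac)
  moreover have "r \<oplus> t \<otimes> f \<in> cls r" "s \<oplus> \<zero> \<otimes> f \<in> cls s" unfolding lcoset_def using h by auto
  ultimately show "y \<in> {u \<oplus> v | u v. u \<in> cls r \<and> v \<in> cls s}" by blast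
qed

lemma quot_mod_fun_eqI:
  assumes "\<phi> \<in> extensional (quot_mod R f)" "\<psi> \<in> extensional (quot_mod R f)"
    and "\<And>r. r \<in> carrier R \<Longrightarrow> \<phi> (cls r) = \<psi> (cls r)"
  shows "\<phi> = \<psi>"
  using assms by (intro extensionalityI[of _ "quot_mod R f"]) (auto simp: quot_mod_iff)

definition idealizer :: "'a set" where
  "idealizer = {u \<in> carrier R. f \<otimes> u \<in> PIdl f}"

lemma idealizer_closed: "u \<in> idealizer \<Longrightarrow> u \<in> carrier R"
  unfolding idealizer_def by simp

lemma cgenideal_mult_idealizer:
  assumes u: "u \<in> idealizer" and "a \<in> PIdl f"
  shows "a \<otimes> u \<in> PIdl f"
proof -
  obtain t where t: "t \<in> carrier R" "a = t \<otimes> f" using assms unfolding cgenideal_def by blast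
  then have "a \<otimes> u = t \<otimes> (f \<otimes> u)" using u f_closed by (simp add: m_assoc idealizer_def)
  then show ?thesis using t u f_closed cgenideal_lmult unfolding idealizer_def by simp
qed

lemma idealizer_mult: "u \<in> idealizer \<Longrightarrow> v \<in> idealizer \<Longrightarrow> u \<otimes> v \<in> idealizer"
  using cgenideal_mult_idealizer[of v "f \<otimes> u"] f_closed unfolding idealizer_def by (simp add: m_assoc)

lemma idealizer_add: "u \<in> idealizer \<Longrightarrow> v \<in> idealizer \<Longrightarrow> u \<oplus> v \<in> idealizer"
  unfolding idealizer_def using f_closed by (simp add: r_distr cgenideal_add)

lemma idealizer_uminus: "u \<in> idealizer \<Longrightarrow> \<ominus> u \<in> idealizer"
  unfolding idealizer_def using f_closed by (simp add: r_minus cgenideal_uminus)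

lemma zero_in_idealizer: "\<zero> \<in> idealizer"
  unfolding idealizer_def using f_closed by simp

lemma one_in_idealizer: "\<one> \<in> idealizer"
  unfolding idealizer_def using f_closed mult_in_cgenideal[of f \<one>] by simp

definition right_mult :: "'a \<Rightarrow> 'a set \<Rightarrow> 'a set" where
  "right_mult u = (\<lambda>A\<in>quot_mod R f. cls ((SOME r. r \<in> carrier R \<and> A = cls r) \<otimes> u))"

lemma right_mult_lcoset:
  assumes u: "u \<in> idealizer" and r: "r \<in> carrier R"
  shows "right_mult u (cls r) = cls (r \<otimes> u)"
proof -
  let ?r = "SOME r'. r' \<in> carrier R \<and> cls r = cls r'"
  have r': "?r \<in> carrier R" "cls r = cls ?r"
    using someI_ex[of "\<lambda>r'. r' \<in> carrier R \<and> cls r = cls r'"] r by blast+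
  have uc: "u \<in> carrier R" using u idealizer_closed by simp
  have "?r \<ominus> r \<in> PIdl f" using lcoset_eq_iff[OF r'(1) r] r'(2) by simp
  then have "(?r \<ominus> r) \<otimes> u \<in> PIdl f" by (rule cgenideal_mult_idealizer[OF u])
  moreover have "(?r \<ominus> r) \<otimes> u = ?r \<otimes> u \<ominus> r \<otimes> u"
    using r r' uc by (simp add: minus_eq l_distr l_minus)
  ultimately have "cls (?r \<otimes> u) = cls (r \<otimes> u)" using lcoset_eq_iff r r' uc by simp
  then show ?thesis unfolding right_mult_def using r r' by simp
qed

lemma right_mult_eq_iff:
  assumes u: "u \<in> idealizer" and v: "v \<in> idealizer"
  shows "right_mult u = right_mult v \<longleftrightarrow> u \<ominus> v \<in> PIdl f"
proof
  assume "right_mult u = right_mult v"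
  then have "cls (\<one> \<otimes> u) = cls (\<one> \<otimes> v)" using right_mult_lcoset u v by (metis one_closed)
  then show "u \<ominus> v \<in> PIdl f" using lcoset_eq_iff u v idealizer_closed by simp
next
  assume uv: "u \<ominus> v \<in> PIdl f"
  have "cls (r \<otimes> u) = cls (r \<otimes> v)" if r: "r \<in> carrier R" for r
  proof -
    have "r \<otimes> (u \<ominus> v) = r \<otimes> u \<ominus> r \<otimes> v"
      using r u v idealizer_closed by (simp add: minus_eq r_distr r_minus)
    then show ?thesis
      using cgenideal_lmult[OF f_closed r uv] lcoset_eq_iff r u v idealizer_closed by simp
  qed
  then show "right_mult u = right_mult v"
    using right_mult_lcoset u v by (intro quot_mod_fun_eqI) (simp_all add: right_mult_def)
qed

lemma right_mult_in_End:
  assumes u: "u \<in> idealizer"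
  shows "right_mult u \<in> module_endos R f"
proof -
  have uc: "u \<in> carrier R" using u idealizer_closed by simp
  have "right_mult u \<in> quot_mod R f \<rightarrow> quot_mod R f"
  proof
    fix A assume "A \<in> quot_mod R f"
    then obtain r where "r \<in> carrier R" "A = cls r" unfolding quot_mod_iff by blast
    then show "right_mult u A \<in> quot_mod R f" using right_mult_lcoset[OF u] uc by simp
  qed
  moreover have "right_mult u \<in> extensional (quot_mod R f)" unfolding right_mult_def by simp
  moreover have "right_mult u (cls (a \<otimes> r \<oplus> r')) = cls (a \<otimes> s \<oplus> s')"
    if c: "a \<in> carrier R" "r \<in> carrier R" "r' \<in> carrier R" "s \<in> carrier R" "s' \<in> carrier R"
      and h: "right_mult u (cls r) = cls s" "right_mult u (cls r') = cls s'"
    for a r r' s s'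
  proof -
    have "r \<otimes> u \<ominus> s \<in> PIdl f" "r' \<otimes> u \<ominus> s' \<in> PIdl f"
      using h right_mult_lcoset u c lcoset_eq_iff uc by simp_all
    then have "a \<otimes> (r \<otimes> u \<ominus> s) \<oplus> (r' \<otimes> u \<ominus> s') \<in> PIdl f"
      using c f_closed cgenideal_lmult cgenideal_add by simp
    moreover have "a \<otimes> (r \<otimes> u \<ominus> s) \<oplus> (r' \<otimes> u \<ominus> s') = (a \<otimes> r \<oplus> r') \<otimes> u \<ominus> (a \<otimes> s \<oplus> s')"
      using c uc by (simp add: minus_eq r_distr l_distr r_minus minus_add m_assoc a_ac)
    ultimately show ?thesis using right_mult_lcoset lcoset_eq_iff u c uc by simp
  qed
  ultimately show ?thesis unfolding module_endos_def by blast
qed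

lemma End_elem_right_mult:
  assumes \<phi>: "\<phi> \<in> module_endos R f"
  shows "\<exists>u\<in>idealizer. \<phi> = right_mult u"
proof -
  note \<phi>_props = \<phi>[unfolded module_endos_def, THEN CollectD]
  note ext = \<phi>_props[THEN conjunct1] and maps = \<phi>_props[THEN conjunct2, THEN conjunct1]
    and lin = \<phi>_props[THEN conjunct2, THEN conjunct2, rule_format]
  have "\<phi> (cls \<one>) \<in> quot_mod R f" "\<phi> (cls \<zero>) \<in> quot_mod R f"
    using funcset_mem[OF maps] by simp_all
  then obtain u s where u: "u \<in> carrier R" "\<phi> (cls \<one>) = cls u"
    and s: "s \<in> carrier R" "\<phi> (cls \<zero>) = cls s"
    unfolding quot_mod_iff by blast
  have "cls s = cls (s \<oplus> s)" using lin[of \<one> \<zero> \<zero> s s] s by simp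
  then have "s \<ominus> (s \<oplus> s) \<in> PIdl f" using lcoset_eq_iff s by simp
  moreover have "s \<ominus> (s \<oplus> s) = \<ominus> s" using s by (simp add: minus_eq minus_add a_assoc[symmetric] r_neg)
  ultimately have "s \<in> PIdl f" using cgenideal_uminus[OF f_closed, of "\<ominus> s"] s by simp
  then have \<phi>0: "\<phi> (cls \<zero>) = cls \<zero>" using s lcoset_eq_zero_iff by simp
  have \<phi>r: "\<phi> (cls r) = cls (r \<otimes> u)" if r: "r \<in> carrier R" for r
    using lin[of r \<one> \<zero> u \<zero>] u \<phi>0 r by simp
  have "cls f = cls \<zero>" using lcoset_eq_zero_iff f_closed cgenideal_self by simp
  then have "cls (f \<otimes> u) = cls \<zero>" using \<phi>r \<phi>0 f_closed by metis
  then have ui: "u \<in> idealizer" using lcoset_eq_zero_iff f_closed u unfolding idealizer_def by simp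
  have "\<phi> = right_mult u"
    using ext \<phi>r right_mult_lcoset[OF ui]
    by (intro quot_mod_fun_eqI) (simp_all add: right_mult_def)
  then show ?thesis using ui by blast
qed

lemma End_carrier: "carrier E = right_mult ` idealizer"
  using End_elem_right_mult right_mult_in_End by (auto simp: End_ring_def)

lemma End_mult:
  "u \<in> idealizer \<Longrightarrow> v \<in> idealizer \<Longrightarrow> right_mult u \<otimes>\<^bsub>E\<^esub> right_mult v = right_mult (v \<otimes> u)"
  using right_mult_lcoset idealizer_mult idealizer_closed
  by (auto simp: End_ring_def right_mult_def m_assoc intro!: quot_mod_fun_eqI)

lemma End_add:
  "u \<in> idealizer \<Longrightarrow> v \<in> idealizer \<Longrightarrow> right_mult u \<oplus>\<^bsub>E\<^esub> right_mult v = right_mult (u \<oplus> v)"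
  using right_mult_lcoset idealizer_add idealizer_closed lcoset_sum
  by (auto simp: End_ring_def right_mult_def r_distr intro!: quot_mod_fun_eqI)

lemma End_one: "\<one>\<^bsub>E\<^esub> = right_mult \<one>"
  using right_mult_lcoset one_in_idealizer
  by (auto simp: End_ring_def right_mult_def intro!: quot_mod_fun_eqI)

lemma End_zero: "\<zero>\<^bsub>E\<^esub> = right_mult \<zero>"
  using right_mult_lcoset zero_in_idealizer
  by (auto simp: End_ring_def right_mult_def intro!: quot_mod_fun_eqI)

lemma End_carrierE:
  assumes "\<phi> \<in> carrier E"
  obtains u where "u \<in> idealizer" "\<phi> = right_mult u"
  using assms End_carrier by blast

lemma right_mult_in_carrier: "u \<in> idealizer \<Longrightarrow> right_mult u \<in> carrier E"
  using End_carrier by blast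

lemma abelian_group_End: "abelian_group E"
proof (rule abelian_groupI)
  fix a b assume "a \<in> carrier E" "b \<in> carrier E"
  then show "a \<oplus>\<^bsub>E\<^esub> b \<in> carrier E"
    by (auto elim!: End_carrierE simp: End_add idealizer_add right_mult_in_carrier)
next
  show "\<zero>\<^bsub>E\<^esub> \<in> carrier E" by (simp add: End_zero zero_in_idealizer right_mult_in_carrier)
next
  fix a b c assume "a \<in> carrier E" "b \<in> carrier E" "c \<in> carrier E"
  then show "a \<oplus>\<^bsub>E\<^esub> b \<oplus>\<^bsub>E\<^esub> c = a \<oplus>\<^bsub>E\<^esub> (b \<oplus>\<^bsub>E\<^esub> c)"
    by (auto elim!: End_carrierE simp: End_add idealizer_add idealizer_closed a_assoc)
next
  fix a b assume "a \<in> carrier E" "b \<in> carrier E"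
  then show "a \<oplus>\<^bsub>E\<^esub> b = b \<oplus>\<^bsub>E\<^esub> a"
    by (auto elim!: End_carrierE simp: End_add idealizer_closed a_comm)
next
  fix a assume "a \<in> carrier E"
  then show "\<zero>\<^bsub>E\<^esub> \<oplus>\<^bsub>E\<^esub> a = a"
    by (auto elim!: End_carrierE simp: End_add End_zero zero_in_idealizer idealizer_closed)
next
  fix a assume "a \<in> carrier E"
  then obtain u where u: "u \<in> idealizer" "a = right_mult u" by (rule End_carrierE)
  then have "right_mult (\<ominus> u) \<oplus>\<^bsub>E\<^esub> a = \<zero>\<^bsub>E\<^esub>"
    using idealizer_uminus idealizer_closed by (simp add: End_add End_zero l_neg)
  then show "\<exists>y\<in>carrier E. y \<oplus>\<^bsub>E\<^esub> a = \<zero>\<^bsub>E\<^esub>"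
    using right_mult_in_carrier idealizer_uminus u by blast
qed

lemma monoid_End: "monoid E"
proof (rule monoidI)
  fix a b assume "a \<in> carrier E" "b \<in> carrier E"
  then show "a \<otimes>\<^bsub>E\<^esub> b \<in> carrier E"
    by (auto elim!: End_carrierE simp: End_mult idealizer_mult right_mult_in_carrier)
next
  show "\<one>\<^bsub>E\<^esub> \<in> carrier E" by (simp add: End_one one_in_idealizer right_mult_in_carrier)
next
  fix a b c assume "a \<in> carrier E" "b \<in> carrier E" "c \<in> carrier E"
  then show "a \<otimes>\<^bsub>E\<^esub> b \<otimes>\<^bsub>E\<^esub> c = a \<otimes>\<^bsub>E\<^esub> (b \<otimes>\<^bsub>E\<^esub> c)"
    by (auto elim!: End_carrierE simp: End_mult idealizer_mult idealizer_closed m_assoc)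
next
  fix a assume "a \<in> carrier E"
  then show "\<one>\<^bsub>E\<^esub> \<otimes>\<^bsub>E\<^esub> a = a"
    by (auto elim!: End_carrierE simp: End_mult End_one one_in_idealizer idealizer_closed)
next
  fix a assume "a \<in> carrier E"
  then show "a \<otimes>\<^bsub>E\<^esub> \<one>\<^bsub>E\<^esub> = a"
    by (auto elim!: End_carrierE simp: End_mult End_one one_in_idealizer idealizer_closed)
qed

lemma ring_End: "ring E"
proof (rule ringI[OF abelian_group_End monoid_End])
  fix a b c assume "a \<in> carrier E" "b \<in> carrier E" "c \<in> carrier E"
  then show "(a \<oplus>\<^bsub>E\<^esub> b) \<otimes>\<^bsub>E\<^esub> c = a \<otimes>\<^bsub>E\<^esub> c \<oplus>\<^bsub>E\<^esub> b \<otimes>\<^bsub>E\<^esub> c"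
    by (auto elim!: End_carrierE
        simp: End_mult End_add idealizer_mult idealizer_add idealizer_closed r_distr)
next
  fix a b c assume "a \<in> carrier E" "b \<in> carrier E" "c \<in> carrier E"
  then show "c \<otimes>\<^bsub>E\<^esub> (a \<oplus>\<^bsub>E\<^esub> b) = c \<otimes>\<^bsub>E\<^esub> a \<oplus>\<^bsub>E\<^esub> c \<otimes>\<^bsub>E\<^esub> b"
    by (auto elim!: End_carrierE
        simp: End_mult End_add idealizer_mult idealizer_add idealizer_closed l_distr)
qed

lemma right_mult_eq_zero_iff: "u \<in> idealizer \<Longrightarrow> right_mult u = \<zero>\<^bsub>E\<^esub> \<longleftrightarrow> u \<in> PIdl f"
  using right_mult_eq_iff[OF _ zero_in_idealizer] idealizer_closed by (simp add: End_zero minus_eq)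

text \<open>The hypothesis on \<open>p\<close> says \<open>Rf + Ru = R\<close>; right multiplication by \<open>p\<close> is then the inverse.\<close>

lemma right_mult_Units:
  assumes u: "u \<in> idealizer" and p: "p \<in> carrier R" "\<one> \<ominus> p \<otimes> u \<in> PIdl f"
    and inj: "\<And>r. r \<in> carrier R \<Longrightarrow> r \<otimes> u \<in> PIdl f \<Longrightarrow> r \<in> PIdl f"
  shows "right_mult u \<in> Units E"
proof -
  have uc: "u \<in> carrier R" using u idealizer_closed by simp
  have "(f \<otimes> p) \<otimes> u = f \<ominus> f \<otimes> (\<one> \<ominus> p \<otimes> u)"
    using uc p f_closed by (simp add: minus_eq r_distr r_minus m_assoc minus_add a_assoc[symmetric] r_neg)
  then have "(f \<otimes> p) \<otimes> u \<in> PIdl f"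
    using cgenideal_minus[OF f_closed cgenideal_self[OF f_closed] cgenideal_lmult[OF f_closed f_closed p(2)]]
    by simp
  then have pi: "p \<in> idealizer" using inj p f_closed unfolding idealizer_def by simp
  have "p \<otimes> u \<ominus> \<one> = \<ominus> (\<one> \<ominus> p \<otimes> u)" using uc p by (simp add: minus_eq minus_add a_comm)
  then have "p \<otimes> u \<ominus> \<one> \<in> PIdl f" using cgenideal_uminus[OF f_closed p(2)] by simp
  then have left: "right_mult u \<otimes>\<^bsub>E\<^esub> right_mult p = \<one>\<^bsub>E\<^esub>"
    using u pi End_mult End_one right_mult_eq_iff idealizer_mult one_in_idealizer by simp
  have "(u \<otimes> p \<ominus> \<one>) \<otimes> u = \<ominus> (u \<otimes> (\<one> \<ominus> p \<otimes> u))"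
    using uc p by (simp add: minus_eq l_distr r_distr l_minus r_minus m_assoc minus_add a_comm)
  then have "(u \<otimes> p \<ominus> \<one>) \<otimes> u \<in> PIdl f"
    using cgenideal_uminus[OF f_closed cgenideal_lmult[OF f_closed uc p(2)]] by simp
  then have "u \<otimes> p \<ominus> \<one> \<in> PIdl f" using inj uc p by simp
  then have right: "right_mult p \<otimes>\<^bsub>E\<^esub> right_mult u = \<one>\<^bsub>E\<^esub>"
    using u pi End_mult End_one right_mult_eq_iff idealizer_mult one_in_idealizer by simp
  show ?thesis
    using left right u pi right_mult_in_carrier unfolding Units_def by blast
qed

lemma cgenideal_cancel_if_skew_field_End:
  assumes E: "skew_field E" and u: "u \<in> idealizer" "u \<notin> PIdl f"
    and r: "r \<in> carrier R" "r \<otimes> u \<in> PIdl f"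
  shows "r \<in> PIdl f"
proof -
  have uc: "u \<in> carrier R" using u idealizer_closed by simp
  have "right_mult u \<in> Units E"
    using E u right_mult_in_carrier right_mult_eq_zero_iff unfolding skew_field_def by blast
  then obtain \<psi> where \<psi>: "\<psi> \<in> carrier E" "\<psi> \<otimes>\<^bsub>E\<^esub> right_mult u = \<one>\<^bsub>E\<^esub>"
    unfolding Units_def by blast
  obtain w where w: "w \<in> idealizer" "\<psi> = right_mult w" using \<psi>(1) by (rule End_carrierE)
  have wc: "w \<in> carrier R" using w idealizer_closed by simp
  have "right_mult (u \<otimes> w) = right_mult \<one>" using \<psi> w u End_mult End_one by simp
  then have "u \<otimes> w \<ominus> \<one> \<in> PIdl f"
    using right_mult_eq_iff idealizer_mult u w one_in_idealizer by simp
  then have "(r \<otimes> u) \<otimes> w \<ominus> r \<otimes> (u \<otimes> w \<ominus> \<one>) \<in> PIdl f"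
    using cgenideal_minus[OF f_closed cgenideal_mult_idealizer[OF w(1) r(2)]
        cgenideal_lmult[OF f_closed r(1)]] by simp
  moreover have "(r \<otimes> u) \<otimes> w \<ominus> r \<otimes> (u \<otimes> w \<ominus> \<one>) = r"
    using r uc wc by (simp add: minus_eq r_distr r_minus m_assoc minus_add a_assoc[symmetric] r_neg)
  ultimately show ?thesis by simp
qed

end

declare nat_pow_Suc[simp del]

locale ore_extension = ring R for R (structure) +
  fixes D :: "'a set" and \<sigma> \<delta> :: "'a \<Rightarrow> 'a" and x :: 'a
  assumes skew_subfield: "skew_subfield R D"
    and x_closed: "x \<in> carrier R"
    and unique_coeffs: "\<forall>r\<in>carrier R. \<exists>!c. coeff_rep R D x c r"
    and x_mult: "\<forall>a\<in>D. x \<otimes> a = \<sigma> a \<otimes> x \<oplus> \<delta> a"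
    and automorphism: "is_automorphism R D \<sigma>"
    and derivation: "is_sigma_derivation R D \<sigma> \<delta>"
begin

declare nat_pow_Suc[simp del]

lemma D_subring: "subring D R"
  using skew_subfield unfolding skew_subfield_def by auto

lemma D_closed: "a \<in> D \<Longrightarrow> a \<in> carrier R"
  using subringE(1)[OF D_subring] by auto

lemma zero_in_D [simp]: "\<zero> \<in> D"
  using subringE(2)[OF D_subring] by auto

lemma one_in_D [simp]: "\<one> \<in> D"
  using subringE(3)[OF D_subring] by auto

lemma D_uminus: "a \<in> D \<Longrightarrow> \<ominus> a \<in> D"
  using subringE(5)[OF D_subring] by auto

lemma D_mult: "a \<in> D \<Longrightarrow> b \<in> D \<Longrightarrow> a \<otimes> b \<in> D"
  using subringE(6)[OF D_subring] by auto

lemma D_add: "a \<in> D \<Longrightarrow> b \<in> D \<Longrightarrow> a \<oplus> b \<in> D"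
  using subringE(7)[OF D_subring] by auto

lemma one_neq_zero: "\<one> \<noteq> \<zero>"
  using skew_subfield unfolding skew_subfield_def by auto

lemma D_inverse: "a \<in> D \<Longrightarrow> a \<noteq> \<zero> \<Longrightarrow> \<exists>b\<in>D. a \<otimes> b = \<one> \<and> b \<otimes> a = \<one>"
  using skew_subfield unfolding skew_subfield_def by auto

lemma D_integral:
  assumes "a \<in> D" "b \<in> D" "a \<noteq> \<zero>" "b \<noteq> \<zero>" shows "a \<otimes> b \<noteq> \<zero>"
proof
  assume ab: "a \<otimes> b = \<zero>"
  obtain c where "c \<in> D" "c \<otimes> a = \<one>" using D_inverse assms by blast
  then have "b = c \<otimes> (a \<otimes> b)" using assms D_closed by (simp add: m_assoc[symmetric])
  then show False using ab assms \<open>c \<in> D\<close> D_closed by simp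
qed

lemma x_pow_Suc_mult: "y \<in> carrier R \<Longrightarrow> x [^] Suc n \<otimes> y = x \<otimes> (x [^] n \<otimes> y)"
  using x_closed by (simp add: nat_pow_Suc2 m_assoc)

lemma sigma_D: "a \<in> D \<Longrightarrow> \<sigma> a \<in> D"
  using automorphism unfolding is_automorphism_def bij_betw_def by auto

lemma delta_D: "a \<in> D \<Longrightarrow> \<delta> a \<in> D"
  using derivation unfolding is_sigma_derivation_def by auto

lemma sigma_zero: "\<sigma> \<zero> = \<zero>"
proof -
  have s0: "\<sigma> \<zero> \<in> carrier R" using sigma_D[of \<zero>] D_closed by simp
  have "\<sigma> (\<zero> \<oplus> \<zero>) = \<sigma> \<zero> \<oplus> \<sigma> \<zero>"
    using automorphism zero_in_D unfolding is_automorphism_def by blast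
  then have "\<sigma> \<zero> \<oplus> \<sigma> \<zero> = \<sigma> \<zero>" by (metis l_zero zero_closed)
  then show ?thesis using add.l_cancel_one[OF s0 s0] by blast
qed

lemma sigma_pow_D: "a \<in> D \<Longrightarrow> (\<sigma> ^^ k) a \<in> D"
  by (induct k) (auto simp: sigma_D)

lemma sigma_pow_nonzero: "a \<in> D \<Longrightarrow> a \<noteq> \<zero> \<Longrightarrow> (\<sigma> ^^ k) a \<noteq> \<zero>"
proof (induct k)
  case (Suc k)
  have "inj_on \<sigma> D" using automorphism unfolding is_automorphism_def bij_betw_def by blast
  then have "\<sigma> ((\<sigma> ^^ k) a) \<noteq> \<sigma> \<zero>"
    by (rule inj_on_contraD) (use Suc in \<open>auto simp: sigma_pow_D\<close>)
  then show ?case using sigma_zero by simp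
qed simp

lemma sigma_pow_surj: "b \<in> D \<Longrightarrow> \<exists>a\<in>D. (\<sigma> ^^ k) a = b"
proof (induct k arbitrary: b)
  case (Suc k)
  have "b \<in> \<sigma> ` D"
    using Suc.prems automorphism unfolding is_automorphism_def bij_betw_def by simp
  then obtain c where c: "c \<in> D" "b = \<sigma> c" by blast
  obtain a where "a \<in> D" "(\<sigma> ^^ k) a = c" using Suc.hyps c(1) by blast
  then show ?case using c by (intro bexI[of _ a]) simp_all
qed (intro bexI, simp_all)

primrec deg_below :: "nat \<Rightarrow> 'a set" where
  "deg_below 0 = {\<zero>}"
| "deg_below (Suc n) = {c \<otimes> x [^] n \<oplus> q | c q. c \<in> D \<and> q \<in> deg_below n}"

declare deg_below.simps(2)[simp del]

lemma deg_below_closed: "r \<in> deg_below n \<Longrightarrow> r \<in> carrier R"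
  by (induct n arbitrary: r) (auto simp: deg_below.simps(2) x_closed D_closed)

lemma deg_below_SucI: "c \<in> D \<Longrightarrow> q \<in> deg_below n \<Longrightarrow> c \<otimes> x [^] n \<oplus> q \<in> deg_below (Suc n)"
  by (auto simp: deg_below.simps(2))

lemma deg_below_SucE:
  assumes "r \<in> deg_below (Suc n)"
  obtains c q where "c \<in> D" "q \<in> deg_below n" "r = c \<otimes> x [^] n \<oplus> q"
  using assms by (auto simp: deg_below.simps(2))

lemma deg_below_Suc: "q \<in> deg_below n \<Longrightarrow> q \<in> deg_below (Suc n)"
  using deg_below_SucI[of \<zero> q n] deg_below_closed x_closed by simp

lemma zero_in_deg_below [simp]: "\<zero> \<in> deg_below n"
  by (induct n) (simp_all add: deg_below_Suc)

lemma monomial_in_deg_below: "c \<in> D \<Longrightarrow> c \<otimes> x [^] n \<in> deg_below (Suc n)"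
  using deg_below_SucI[of c \<zero> n] D_closed x_closed by simp

lemma deg_below_mono: "n \<le> m \<Longrightarrow> deg_below n \<subseteq> deg_below m"
  by (rule lift_Suc_mono_le[of deg_below]) (auto intro: deg_below_Suc)

lemma deg_below_add: "a \<in> deg_below n \<Longrightarrow> b \<in> deg_below n \<Longrightarrow> a \<oplus> b \<in> deg_below n"
proof (induct n arbitrary: a b)
  case (Suc n)
  obtain c q c' q' where h: "c \<in> D" "q \<in> deg_below n" "a = c \<otimes> x [^] n \<oplus> q"
    "c' \<in> D" "q' \<in> deg_below n" "b = c' \<otimes> x [^] n \<oplus> q'"
    using Suc.prems by (auto elim!: deg_below_SucE)
  then have "a \<oplus> b = (c \<oplus> c') \<otimes> x [^] n \<oplus> (q \<oplus> q')"
    using D_closed deg_below_closed x_closed by (simp add: l_distr a_ac)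
  then show ?case using Suc h by (auto intro!: deg_below_SucI D_add)
qed simp

lemma deg_below_uminus: "a \<in> deg_below n \<Longrightarrow> \<ominus> a \<in> deg_below n"
proof (induct n arbitrary: a)
  case (Suc n)
  obtain c q where h: "c \<in> D" "q \<in> deg_below n" "a = c \<otimes> x [^] n \<oplus> q"
    using Suc.prems by (auto elim!: deg_below_SucE)
  then have "\<ominus> a = (\<ominus> c) \<otimes> x [^] n \<oplus> (\<ominus> q)"
    using D_closed deg_below_closed x_closed by (simp add: l_minus minus_add)
  then show ?case using Suc h by (auto intro!: deg_below_SucI D_uminus)
qed simp

lemma deg_below_minus: "a \<in> deg_below n \<Longrightarrow> b \<in> deg_below n \<Longrightarrow> a \<ominus> b \<in> deg_below n"
  by (simp add: minus_eq deg_below_add deg_below_uminus)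

lemma deg_below_D_mult: "d \<in> D \<Longrightarrow> a \<in> deg_below n \<Longrightarrow> d \<otimes> a \<in> deg_below n"
proof (induct n arbitrary: a)
  case (Suc n)
  obtain c q where h: "c \<in> D" "q \<in> deg_below n" "a = c \<otimes> x [^] n \<oplus> q"
    using Suc.prems by (auto elim!: deg_below_SucE)
  then have "d \<otimes> a = (d \<otimes> c) \<otimes> x [^] n \<oplus> d \<otimes> q"
    using Suc.prems D_closed deg_below_closed x_closed by (simp add: r_distr m_assoc)
  then show ?case using Suc h by (auto intro!: deg_below_SucI D_mult)
qed (simp add: D_closed)

lemma deg_below_mult_x: "a \<in> deg_below n \<Longrightarrow> a \<otimes> x \<in> deg_below (Suc n)"
proof (induct n arbitrary: a)
  case (Suc n)
  obtain c q where h: "c \<in> D" "q \<in> deg_below n" "a = c \<otimes> x [^] n \<oplus> q"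
    using Suc.prems by (auto elim!: deg_below_SucE)
  then have "a \<otimes> x = c \<otimes> x [^] Suc n \<oplus> q \<otimes> x"
    using D_closed deg_below_closed x_closed by (simp add: l_distr m_assoc nat_pow_Suc)
  then show ?case using Suc h by (auto intro!: deg_below_SucI)
qed (simp add: x_closed)

lemma deg_below_mult_x_pow: "a \<in> deg_below n \<Longrightarrow> a \<otimes> x [^] j \<in> deg_below (n + j)"
proof (induct j)
  case (Suc j)
  then have "a \<otimes> x [^] Suc j = (a \<otimes> x [^] j) \<otimes> x"
    using deg_below_closed x_closed by (simp add: m_assoc nat_pow_Suc)
  then show ?case using deg_below_mult_x Suc by simp
qed (simp add: deg_below_closed)

lemma x_mult_deg_below: "a \<in> deg_below n \<Longrightarrow> x \<otimes> a \<in> deg_below (Suc n)"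
proof (induct n arbitrary: a)
  case (Suc n)
  obtain c q where h: "c \<in> D" "q \<in> deg_below n" "a = c \<otimes> x [^] n \<oplus> q"
    using Suc.prems by (auto elim!: deg_below_SucE)
  have cc: "c \<in> carrier R" "q \<in> carrier R" "\<sigma> c \<in> carrier R" "\<delta> c \<in> carrier R"
    using h D_closed deg_below_closed sigma_D delta_D by auto
  have "x \<otimes> a = (x \<otimes> c) \<otimes> x [^] n \<oplus> x \<otimes> q"
    using cc h x_closed by (simp add: r_distr m_assoc)
  also have "x \<otimes> c = \<sigma> c \<otimes> x \<oplus> \<delta> c"
    using x_mult h(1) by blast
  also have "(\<sigma> c \<otimes> x \<oplus> \<delta> c) \<otimes> x [^] n \<oplus> x \<otimes> q = \<sigma> c \<otimes> x [^] Suc n \<oplus> (\<delta> c \<otimes> x [^] n \<oplus> x \<otimes> q)"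
    using cc x_closed by (simp add: l_distr m_assoc nat_pow_Suc2 a_assoc)
  finally have eq: "x \<otimes> a = \<sigma> c \<otimes> x [^] Suc n \<oplus> (\<delta> c \<otimes> x [^] n \<oplus> x \<otimes> q)" .
  have "\<delta> c \<otimes> x [^] n \<oplus> x \<otimes> q \<in> deg_below (Suc n)"
    using Suc h delta_D by (intro deg_below_add monomial_in_deg_below) auto
  then show ?case unfolding eq by (rule deg_below_SucI[OF sigma_D[OF h(1)]])
qed (simp add: x_closed)

lemma x_pow_mult_deg_below: "a \<in> deg_below n \<Longrightarrow> x [^] j \<otimes> a \<in> deg_below (j + n)"
  by (induct j) (simp_all add: deg_below_closed x_pow_Suc_mult x_mult_deg_below)

lemma x_pow_mult_D: "d \<in> D \<Longrightarrow> \<exists>q\<in>deg_below k. x [^] k \<otimes> d = (\<sigma> ^^ k) d \<otimes> x [^] k \<oplus> q"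
proof (induct k)
  case (Suc k)
  let ?e = "(\<sigma> ^^ k) d"
  obtain q where q: "q \<in> deg_below k" "x [^] k \<otimes> d = ?e \<otimes> x [^] k \<oplus> q"
    using Suc by auto
  have e: "?e \<in> D" using sigma_pow_D Suc by auto
  have cc: "?e \<in> carrier R" "q \<in> carrier R" "\<sigma> ?e \<in> carrier R" "\<delta> ?e \<in> carrier R"
    using q e D_closed deg_below_closed sigma_D delta_D by auto
  have "x [^] Suc k \<otimes> d = (x \<otimes> ?e) \<otimes> x [^] k \<oplus> x \<otimes> q"
    using q cc Suc.prems D_closed x_closed by (simp add: x_pow_Suc_mult r_distr m_assoc)
  also have "x \<otimes> ?e = \<sigma> ?e \<otimes> x \<oplus> \<delta> ?e"
    using x_mult e by blast
  also have "(\<sigma> ?e \<otimes> x \<oplus> \<delta> ?e) \<otimes> x [^] k \<oplus> x \<otimes> q = (\<sigma> ^^ Suc k) d \<otimes> x [^] Suc k \<oplus> (\<delta> ?e \<otimes> x [^] k \<oplus> x \<otimes> q)"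
    using cc x_closed by (simp add: l_distr m_assoc nat_pow_Suc2 a_assoc)
  finally have "x [^] Suc k \<otimes> d = (\<sigma> ^^ Suc k) d \<otimes> x [^] Suc k \<oplus> (\<delta> ?e \<otimes> x [^] k \<oplus> x \<otimes> q)" .
  moreover have "\<delta> ?e \<otimes> x [^] k \<oplus> x \<otimes> q \<in> deg_below (Suc k)"
    using q e delta_D by (intro deg_below_add monomial_in_deg_below x_mult_deg_below) auto
  ultimately show ?case by (intro bexI)
qed (use D_closed in \<open>auto intro!: bexI[of _ \<zero>]\<close>)

lemma deg_below_mult: "a \<in> deg_below n \<Longrightarrow> b \<in> deg_below (Suc m) \<Longrightarrow> a \<otimes> b \<in> deg_below (n + m)"
proof (induct n arbitrary: a)
  case (Suc n)
  obtain c q where h: "c \<in> D" "q \<in> deg_below n" "a = c \<otimes> x [^] n \<oplus> q"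
    using Suc.prems by (auto elim!: deg_below_SucE)
  have "a \<otimes> b = c \<otimes> (x [^] n \<otimes> b) \<oplus> q \<otimes> b"
    using h Suc.prems D_closed deg_below_closed x_closed by (simp add: l_distr m_assoc)
  moreover have "c \<otimes> (x [^] n \<otimes> b) \<in> deg_below (Suc n + m)"
    using deg_below_D_mult[OF h(1) x_pow_mult_deg_below[OF Suc.prems(2), of n]] by simp
  moreover have "q \<otimes> b \<in> deg_below (Suc n + m)"
    using Suc.hyps[OF h(2) Suc.prems(2)] deg_below_mono[of "n + m" "Suc n + m"] by auto
  ultimately show ?case by (simp add: deg_below_add)
qed (simp add: deg_below_closed)

lemma leading_term_mult:
  assumes c: "c \<in> D" and d: "d \<in> D" and q: "q \<in> deg_below n" and q': "q' \<in> deg_below m"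
  shows "\<exists>r\<in>deg_below (n + m).
    (c \<otimes> x [^] n \<oplus> q) \<otimes> (d \<otimes> x [^] m \<oplus> q') = (c \<otimes> (\<sigma> ^^ n) d) \<otimes> x [^] (n + m) \<oplus> r"
proof -
  let ?s = "(\<sigma> ^^ n) d" and ?b = "d \<otimes> x [^] m \<oplus> q'"
  obtain q1 where q1: "q1 \<in> deg_below n" "x [^] n \<otimes> d = ?s \<otimes> x [^] n \<oplus> q1"
    using x_pow_mult_D d by blast
  have cc: "c \<in> carrier R" "d \<in> carrier R" "q \<in> carrier R" "q' \<in> carrier R" "q1 \<in> carrier R"
    "?s \<in> carrier R"
    using c d q q' q1 D_closed deg_below_closed sigma_pow_D by auto
  let ?r = "c \<otimes> (q1 \<otimes> x [^] m) \<oplus> c \<otimes> (x [^] n \<otimes> q') \<oplus> q \<otimes> ?b"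
  have "(c \<otimes> x [^] n \<oplus> q) \<otimes> ?b = c \<otimes> ((x [^] n \<otimes> d) \<otimes> x [^] m) \<oplus> c \<otimes> (x [^] n \<otimes> q') \<oplus> q \<otimes> ?b"
    using cc x_closed by (simp add: l_distr r_distr m_assoc a_ac)
  also have "\<dots> = (c \<otimes> ?s) \<otimes> x [^] (n + m) \<oplus> ?r"
    using cc q1 x_closed by (simp add: l_distr r_distr m_assoc a_assoc nat_pow_mult)
  finally have eq: "(c \<otimes> x [^] n \<oplus> q) \<otimes> ?b = (c \<otimes> ?s) \<otimes> x [^] (n + m) \<oplus> ?r" .
  have "?r \<in> deg_below (n + m)"
    using deg_below_D_mult[OF c deg_below_mult_x_pow[OF q1(1)]]
      deg_below_D_mult[OF c x_pow_mult_deg_below[OF q']]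
      deg_below_mult[OF q deg_below_SucI[OF d q']]
    by (intro deg_below_add) auto
  with eq show ?thesis by (intro bexI)
qed

lemma deg_below_finsum:
  "r \<in> deg_below n \<Longrightarrow>
     \<exists>e. (\<forall>i. e i \<in> D) \<and> (\<forall>i\<ge>n. e i = \<zero>) \<and> r = (\<Oplus>i\<in>{..<n}. e i \<otimes> x [^] i)"
proof (induct n arbitrary: r)
  case 0
  then show ?case by (intro exI[of _ "\<lambda>_. \<zero>"]) simp
next
  case (Suc n)
  obtain c q where h: "c \<in> D" "q \<in> deg_below n" "r = c \<otimes> x [^] n \<oplus> q"
    using Suc.prems by (auto elim!: deg_below_SucE)
  obtain e where e: "\<forall>i. e i \<in> D" "\<forall>i\<ge>n. e i = \<zero>" "q = (\<Oplus>i\<in>{..<n}. e i \<otimes> x [^] i)"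
    using Suc.hyps[OF h(2)] by blast
  let ?e = "e(n := c)"
  have "(\<Oplus>i\<in>{..<Suc n}. ?e i \<otimes> x [^] i) = c \<otimes> x [^] n \<oplus> (\<Oplus>i\<in>{..<n}. ?e i \<otimes> x [^] i)"
    unfolding lessThan_Suc using e h D_closed x_closed by (subst finsum_insert) auto
  also have "(\<Oplus>i\<in>{..<n}. ?e i \<otimes> x [^] i) = q"
    using e D_closed x_closed by (auto intro: finsum_cong)
  finally have "r = (\<Oplus>i\<in>{..<Suc n}. ?e i \<otimes> x [^] i)" using h by simp
  moreover have "\<forall>i. ?e i \<in> D" "\<forall>i\<ge>Suc n. ?e i = \<zero>" using e h by auto
  ultimately show ?case by blast
qed

text \<open>This is where uniqueness of coefficients is used.\<close>

lemma leading_coeff_eq_zero: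
  assumes c: "c \<in> D" and q: "q \<in> deg_below n" and z: "c \<otimes> x [^] n \<oplus> q = \<zero>"
  shows "c = \<zero>"
proof -
  obtain e where e: "\<forall>i. e i \<in> D" "\<forall>i\<ge>n. e i = \<zero>" "q = (\<Oplus>i\<in>{..<n}. e i \<otimes> x [^] i)"
    using deg_below_finsum[OF q] by blast
  let ?e = "e(n := c)"
  have "(\<Oplus>i\<in>{..n}. ?e i \<otimes> x [^] i) = c \<otimes> x [^] n \<oplus> (\<Oplus>i\<in>{..<n}. ?e i \<otimes> x [^] i)"
    unfolding lessThan_Suc_atMost[symmetric] lessThan_Suc using e c D_closed x_closed
    by (subst finsum_insert) auto
  also have "(\<Oplus>i\<in>{..<n}. ?e i \<otimes> x [^] i) = q"
    using e D_closed x_closed by (auto intro: finsum_cong)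
  finally have "\<zero> = (\<Oplus>i\<in>{..n}. ?e i \<otimes> x [^] i)" using z by simp
  then have "coeff_rep R D x ?e \<zero>"
    unfolding coeff_rep_def using e c by (auto intro!: exI[of _ n])
  moreover have "coeff_rep R D x (\<lambda>_. \<zero>) \<zero>"
    unfolding coeff_rep_def using x_closed by (auto intro!: exI[of _ 0])
  ultimately have "?e = (\<lambda>_. \<zero>)" using unique_coeffs by (metis zero_closed)
  then show ?thesis by (metis fun_upd_same)
qed

lemma monomial_in_deg_below_eq_zero: "c \<in> D \<Longrightarrow> c \<otimes> x [^] n \<in> deg_below n \<Longrightarrow> c = \<zero>"
  using leading_coeff_eq_zero[of c "\<ominus> (c \<otimes> x [^] n)" n] deg_below_uminus D_closed x_closed
  by (simp add: r_neg)

lemma finsum_in_deg_below: "\<forall>i. e i \<in> D \<Longrightarrow> (\<Oplus>i\<in>{..<k}. e i \<otimes> x [^] i) \<in> deg_below k"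
proof (induct k)
  case (Suc k)
  have "(\<Oplus>i\<in>{..<Suc k}. e i \<otimes> x [^] i) = e k \<otimes> x [^] k \<oplus> (\<Oplus>i\<in>{..<k}. e i \<otimes> x [^] i)"
    unfolding lessThan_Suc using Suc D_closed x_closed by (subst finsum_insert) auto
  then show ?case using Suc deg_below_SucI by simp
qed simp

lemma in_some_deg_below: "r \<in> carrier R \<Longrightarrow> \<exists>n. r \<in> deg_below n"
proof -
  assume "r \<in> carrier R"
  then obtain e where "coeff_rep R D x e r" using unique_coeffs by blast
  then obtain N :: nat where "\<forall>i. e i \<in> D" "r = (\<Oplus>i\<in>{..N}. e i \<otimes> x [^] i)"
    unfolding coeff_rep_def by blast
  then show ?thesis
    using finsum_in_deg_below[of e "Suc N"] unfolding lessThan_Suc_atMost by auto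
qed

text \<open>As for \<open>ore_degree\<close>, the junk value \<open>degree \<zero> = 0\<close> coincides with the degree of constants.\<close>

definition degree :: "'a \<Rightarrow> nat" where
  "degree r = (LEAST n. r \<in> deg_below (Suc n))"

lemma in_deg_below_degree: "r \<in> carrier R \<Longrightarrow> r \<in> deg_below (Suc (degree r))"
proof -
  assume "r \<in> carrier R"
  then obtain n where "r \<in> deg_below n" using in_some_deg_below by blast
  then have "r \<in> deg_below (Suc n)" using deg_below_Suc by blast
  then show ?thesis unfolding degree_def by (rule LeastI)
qed

lemma degree_le: "r \<in> deg_below (Suc m) \<Longrightarrow> degree r \<le> m"
  unfolding degree_def by (rule Least_le)

lemma degree_less: "r \<noteq> \<zero> \<Longrightarrow> r \<in> deg_below k \<Longrightarrow> degree r < k"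
  using degree_le by (cases k) (auto simp: less_Suc_eq_le)

lemma in_deg_below_if_degree_less: "r \<in> carrier R \<Longrightarrow> degree r < k \<Longrightarrow> r \<in> deg_below k"
  using in_deg_below_degree deg_below_mono[of "Suc (degree r)" k] by auto

lemma leading_term:
  assumes "r \<in> carrier R" "r \<noteq> \<zero>"
  obtains c q where "c \<in> D" "c \<noteq> \<zero>" "q \<in> deg_below (degree r)" "r = c \<otimes> x [^] degree r \<oplus> q"
proof -
  obtain c q where h: "c \<in> D" "q \<in> deg_below (degree r)" "r = c \<otimes> x [^] degree r \<oplus> q"
    using in_deg_below_degree[OF assms(1)] by (auto elim!: deg_below_SucE)
  moreover have "c \<noteq> \<zero>"
  proof
    assume "c = \<zero>"
    then have "r \<in> deg_below (degree r)" using h deg_below_closed x_closed by simp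
    then show False using degree_less[OF assms(2)] by auto
  qed
  ultimately show ?thesis using that by blast
qed

lemma degree_leading_term:
  assumes c: "c \<in> D" "c \<noteq> \<zero>" and q: "q \<in> deg_below n"
  shows "degree (c \<otimes> x [^] n \<oplus> q) = n"
proof -
  let ?r = "c \<otimes> x [^] n \<oplus> q"
  have r: "?r \<in> carrier R" using c q D_closed deg_below_closed x_closed by simp
  have "degree ?r \<le> n" using degree_le deg_below_SucI c q by blast
  moreover have "\<not> degree ?r < n"
  proof
    assume "degree ?r < n"
    then have "?r \<ominus> q \<in> deg_below n"
      using in_deg_below_if_degree_less[OF r] deg_below_minus q by blast
    moreover have "?r \<ominus> q = c \<otimes> x [^] n"
      using c q D_closed deg_below_closed x_closed by (simp add: minus_eq a_assoc r_neg)
    ultimately show False using monomial_in_deg_below_eq_zero c by auto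
  qed
  ultimately show ?thesis by simp
qed

text \<open>Leading coefficients multiply to \<open>c \<sigma>\<^sup>n(d)\<close>, which is nonzero because \<open>\<sigma>\<close> is injective.\<close>

lemma degree_mult:
  assumes a: "a \<in> carrier R" "a \<noteq> \<zero>" and b: "b \<in> carrier R" "b \<noteq> \<zero>"
  shows "a \<otimes> b \<noteq> \<zero>" and "degree (a \<otimes> b) = degree a + degree b"
proof -
  obtain c q where cq: "c \<in> D" "c \<noteq> \<zero>" "q \<in> deg_below (degree a)" "a = c \<otimes> x [^] degree a \<oplus> q"
    using leading_term a by blast
  obtain d q' where dq: "d \<in> D" "d \<noteq> \<zero>" "q' \<in> deg_below (degree b)"
    "b = d \<otimes> x [^] degree b \<oplus> q'"
    using leading_term b by blast
  obtain r where r: "r \<in> deg_below (degree a + degree b)"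
    "a \<otimes> b = (c \<otimes> (\<sigma> ^^ degree a) d) \<otimes> x [^] (degree a + degree b) \<oplus> r"
    using leading_term_mult[OF cq(1) dq(1) cq(3) dq(3)] cq dq by auto
  have e: "c \<otimes> (\<sigma> ^^ degree a) d \<in> D" "c \<otimes> (\<sigma> ^^ degree a) d \<noteq> \<zero>"
    using cq dq sigma_pow_D sigma_pow_nonzero D_integral D_mult by auto
  show "a \<otimes> b \<noteq> \<zero>" using leading_coeff_eq_zero[OF e(1) r(1)] e r(2) by auto
  show "degree (a \<otimes> b) = degree a + degree b" using degree_leading_term[OF e r(1)] r(2) by simp
qed

lemma degree_eq_0_iff: "r \<in> carrier R \<Longrightarrow> degree r = 0 \<longleftrightarrow> r \<in> D"
proof
  assume "r \<in> carrier R" "degree r = 0"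
  then show "r \<in> D" using in_deg_below_degree[of r] by (auto elim!: deg_below_SucE simp: D_closed)
next
  assume "r \<in> D"
  then show "degree r = 0" using degree_le[of r 0] monomial_in_deg_below[of r 0] D_closed by simp
qed

lemma left_cancel_leading_term:
  assumes g: "g \<in> carrier R" "g \<noteq> \<zero>" and k: "degree g \<le> k" and c: "c \<in> D"
  shows "\<exists>h\<in>carrier R. c \<otimes> x [^] k \<ominus> h \<otimes> g \<in> deg_below k"
proof -
  let ?m = "degree g"
  obtain e p where ep: "e \<in> D" "e \<noteq> \<zero>" "p \<in> deg_below ?m" "g = e \<otimes> x [^] ?m \<oplus> p"
    using leading_term g by blast
  define j where "j = k - ?m"
  have jk: "j + ?m = k" using k j_def by simp
  obtain s where s: "s \<in> D" "s \<otimes> (\<sigma> ^^ j) e = \<one>"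
    using D_inverse sigma_pow_D sigma_pow_nonzero ep by blast
  define d where "d = c \<otimes> s"
  have d: "d \<in> D" "d \<otimes> (\<sigma> ^^ j) e = c"
    using c s D_mult D_closed sigma_pow_D ep(1) by (auto simp: d_def m_assoc)
  obtain r where r: "r \<in> deg_below (j + ?m)"
    "(d \<otimes> x [^] j \<oplus> \<zero>) \<otimes> (e \<otimes> x [^] ?m \<oplus> p) = (d \<otimes> (\<sigma> ^^ j) e) \<otimes> x [^] (j + ?m) \<oplus> r"
    using leading_term_mult[OF d(1) ep(1) zero_in_deg_below ep(3)] by blast
  have "c \<otimes> x [^] k \<ominus> (d \<otimes> x [^] j) \<otimes> g = \<ominus> r"
    using r d jk c ep(4) D_closed deg_below_closed x_closed
    by (simp add: minus_eq minus_add a_assoc[symmetric] r_neg)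
  then show ?thesis
    using r jk d D_closed x_closed deg_below_uminus by (intro bexI[of _ "d \<otimes> x [^] j"]) auto
qed

lemma right_cancel_leading_term:
  assumes g: "g \<in> carrier R" "g \<noteq> \<zero>" and k: "degree g \<le> k" and c: "c \<in> D"
  shows "\<exists>h\<in>carrier R. c \<otimes> x [^] k \<ominus> g \<otimes> h \<in> deg_below k"
proof -
  let ?m = "degree g"
  obtain e p where ep: "e \<in> D" "e \<noteq> \<zero>" "p \<in> deg_below ?m" "g = e \<otimes> x [^] ?m \<oplus> p"
    using leading_term g by blast
  define j where "j = k - ?m"
  have jk: "?m + j = k" using k j_def by simp
  obtain s where s: "s \<in> D" "e \<otimes> s = \<one>" using D_inverse ep by blast
  obtain d where d: "d \<in> D" "(\<sigma> ^^ ?m) d = s \<otimes> c" using sigma_pow_surj D_mult s c by blast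
  have ed: "e \<otimes> (\<sigma> ^^ ?m) d = c"
    using d s c ep D_closed by (simp add: m_assoc[symmetric])
  obtain r where r: "r \<in> deg_below (?m + j)"
    "(e \<otimes> x [^] ?m \<oplus> p) \<otimes> (d \<otimes> x [^] j \<oplus> \<zero>) = (e \<otimes> (\<sigma> ^^ ?m) d) \<otimes> x [^] (?m + j) \<oplus> r"
    using leading_term_mult[OF ep(1) d(1) ep(3) zero_in_deg_below] by blast
  have "c \<otimes> x [^] k \<ominus> g \<otimes> (d \<otimes> x [^] j) = \<ominus> r"
    using r ed jk c d ep(4) D_closed deg_below_closed x_closed
    by (simp add: minus_eq minus_add a_assoc[symmetric] r_neg)
  then show ?thesis
    using r jk d D_closed x_closed deg_below_uminus by (intro bexI[of _ "d \<otimes> x [^] j"]) auto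
qed

lemma left_division:
  assumes g: "g \<in> carrier R" "g \<noteq> \<zero>" and a: "a \<in> carrier R"
  shows "\<exists>q\<in>carrier R. a \<ominus> q \<otimes> g \<in> deg_below (degree g)"
proof -
  have "\<exists>q\<in>carrier R. a \<ominus> q \<otimes> g \<in> deg_below (degree g)" if "a \<in> deg_below k" for a k
    using that
  proof (induct k arbitrary: a)
    case 0
    then show ?case using g by (intro bexI[of _ \<zero>]) (auto simp: minus_eq)
  next
    case (Suc k)
    obtain c p where cp: "c \<in> D" "p \<in> deg_below k" "a = c \<otimes> x [^] k \<oplus> p"
      using Suc.prems by (auto elim!: deg_below_SucE)
    show ?case
    proof (cases "k < degree g")
      case True
      then have "a \<in> deg_below (degree g)"
        using Suc.prems deg_below_mono[of "Suc k" "degree g"] by (meson Suc_leI subsetD)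
      then show ?thesis using g deg_below_closed by (intro bexI[of _ \<zero>]) (auto simp: minus_eq)
    next
      case False
      then obtain h where h: "h \<in> carrier R" "c \<otimes> x [^] k \<ominus> h \<otimes> g \<in> deg_below k"
        using left_cancel_leading_term[OF g _ cp(1)] by (meson not_less)
      have "a \<ominus> h \<otimes> g = (c \<otimes> x [^] k \<ominus> h \<otimes> g) \<oplus> p"
        using cp h g D_closed deg_below_closed x_closed by (simp add: minus_eq a_ac)
      then have "a \<ominus> h \<otimes> g \<in> deg_below k" using h cp deg_below_add by simp
      then obtain q where q: "q \<in> carrier R" "(a \<ominus> h \<otimes> g) \<ominus> q \<otimes> g \<in> deg_below (degree g)"
        using Suc.hyps by blast
      have "a \<ominus> (q \<oplus> h) \<otimes> g = (a \<ominus> h \<otimes> g) \<ominus> q \<otimes> g"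
        using q h g Suc.prems deg_below_closed by (simp add: l_distr minus_eq minus_add a_ac)
      then show ?thesis using q h by (intro bexI[of _ "q \<oplus> h"]) auto
    qed
  qed
  then show ?thesis using in_some_deg_below a by blast
qed

lemma right_division:
  assumes g: "g \<in> carrier R" "g \<noteq> \<zero>" and a: "a \<in> carrier R"
  shows "\<exists>q\<in>carrier R. a \<ominus> g \<otimes> q \<in> deg_below (degree g)"
proof -
  have "\<exists>q\<in>carrier R. a \<ominus> g \<otimes> q \<in> deg_below (degree g)" if "a \<in> deg_below k" for a k
    using that
  proof (induct k arbitrary: a)
    case 0
    then show ?case using g by (intro bexI[of _ \<zero>]) (auto simp: minus_eq)
  next
    case (Suc k)
    obtain c p where cp: "c \<in> D" "p \<in> deg_below k" "a = c \<otimes> x [^] k \<oplus> p"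
      using Suc.prems by (auto elim!: deg_below_SucE)
    show ?case
    proof (cases "k < degree g")
      case True
      then have "a \<in> deg_below (degree g)"
        using Suc.prems deg_below_mono[of "Suc k" "degree g"] by (meson Suc_leI subsetD)
      then show ?thesis using g deg_below_closed by (intro bexI[of _ \<zero>]) (auto simp: minus_eq)
    next
      case False
      then obtain h where h: "h \<in> carrier R" "c \<otimes> x [^] k \<ominus> g \<otimes> h \<in> deg_below k"
        using right_cancel_leading_term[OF g _ cp(1)] by (meson not_less)
      have "a \<ominus> g \<otimes> h = (c \<otimes> x [^] k \<ominus> g \<otimes> h) \<oplus> p"
        using cp h g D_closed deg_below_closed x_closed by (simp add: minus_eq a_ac)
      then have "a \<ominus> g \<otimes> h \<in> deg_below k" using h cp deg_below_add by simp
      then obtain q where q: "q \<in> carrier R" "(a \<ominus> g \<otimes> h) \<ominus> g \<otimes> q \<in> deg_below (degree g)"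
        using Suc.hyps by blast
      have "a \<ominus> g \<otimes> (q \<oplus> h) = (a \<ominus> g \<otimes> h) \<ominus> g \<otimes> q"
        using q h g Suc.prems deg_below_closed by (simp add: r_distr minus_eq minus_add a_ac)
      then show ?thesis using q h by (intro bexI[of _ "q \<oplus> h"]) auto
    qed
  qed
  then show ?thesis using in_some_deg_below a by blast
qed

text \<open>Division by an element of least degree leaves a remainder of smaller degree in the ideal,
  hence zero.\<close>

lemma left_ideal_principal:
  assumes S: "left_ideal S" and s: "s \<in> S" "s \<noteq> \<zero>"
  shows "\<exists>k\<in>S. k \<noteq> \<zero> \<and> S \<subseteq> PIdl k"
proof -
  let ?P = "\<lambda>n. \<exists>k\<in>S. k \<noteq> \<zero> \<and> degree k = n"
  obtain k where k: "k \<in> S" "k \<noteq> \<zero>" "degree k = (LEAST n. ?P n)"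
    using LeastI[where P = ?P, of "degree s"] s by blast
  have min: "degree k \<le> degree h" if "h \<in> S" "h \<noteq> \<zero>" for h
    unfolding k(3) by (rule Least_le) (use that in blast)
  have "r \<in> PIdl k" if r: "r \<in> S" for r
  proof -
    have kc: "k \<in> carrier R" "r \<in> carrier R" using k r S unfolding left_ideal_def by auto
    obtain q where q: "q \<in> carrier R" "r \<ominus> q \<otimes> k \<in> deg_below (degree k)"
      using left_division kc k by blast
    have "r \<ominus> q \<otimes> k \<in> S" using S r q k unfolding left_ideal_def by blast
    then have "r \<ominus> q \<otimes> k = \<zero>" using min degree_less q by fastforce
    then show ?thesis using q kc unfolding cgenideal_def by auto
  qed
  then show ?thesis using k by blast
qed

lemma ore_degree_D: "r \<in> D \<Longrightarrow> ore_degree R D x r = 0"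
proof -
  assume r: "r \<in> D"
  let ?c = "\<lambda>n::nat. if n = 0 then r else \<zero>"
  have "coeff_rep R D x ?c r"
    unfolding coeff_rep_def using r D_closed x_closed by (auto intro!: exI[of _ 0])
  then have "ore_coeff R D x r = ?c"
    unfolding ore_coeff_def by (rule the1_equality[OF unique_coeffs[rule_format, OF D_closed[OF r]]])
  then show ?thesis unfolding ore_degree_def by (auto intro!: Greatest_equality)
qed

end

locale ore_quotient = ore_extension R D \<sigma> \<delta> x + cyclic_module R f
  for R (structure) and D \<sigma> \<delta> x f +
  assumes f_not_in_D: "f \<notin> D"
begin

lemma f_nonzero: "f \<noteq> \<zero>"
  using f_not_in_D by auto

lemma degree_f_le_cgenideal:
  assumes "r \<in> PIdl f" "r \<noteq> \<zero>"
  shows "degree f \<le> degree r"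
proof -
  obtain t where t: "t \<in> carrier R" "r = t \<otimes> f" using assms unfolding cgenideal_def by blast
  then have "t \<noteq> \<zero>" using assms f_closed by auto
  then show ?thesis using t degree_mult(2) f_closed f_nonzero by simp
qed

lemma one_notin_cgenideal: "\<one> \<notin> PIdl f"
  using degree_f_le_cgenideal[of \<one>] degree_eq_0_iff[of \<one>] degree_eq_0_iff[OF f_closed] f_not_in_D one_neq_zero
  by auto

lemma maximal_left_ideal_if_irreducible:
  assumes irr: "ore_irreducible R D f" and S: "left_ideal S" "f \<in> S"
  shows "S \<subseteq> PIdl f \<or> \<one> \<in> S"
proof -
  obtain k where k: "k \<in> S" "k \<noteq> \<zero>" "S \<subseteq> PIdl k"
    using left_ideal_principal S f_nonzero by blast
  have kc: "k \<in> carrier R" using k S unfolding left_ideal_def by auto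
  obtain t where t: "t \<in> carrier R" "f = t \<otimes> k" using k S unfolding cgenideal_def by blast
  have "t \<in> D \<or> k \<in> D" using irr t kc unfolding ore_irreducible_def by blast
  then show ?thesis
  proof
    assume "t \<in> D"
    moreover have "t \<noteq> \<zero>" using t kc f_nonzero by auto
    ultimately obtain t' where t': "t' \<in> D" "t' \<otimes> t = \<one>" using D_inverse by blast
    then have "k = t' \<otimes> f" using t kc D_closed by (simp add: m_assoc[symmetric])
    then have "PIdl k \<subseteq> PIdl f"
      using cgenideal_subset kc f_closed mult_in_cgenideal t' D_closed by simp
    then show ?thesis using k by blast
  next
    assume "k \<in> D"
    then obtain k' where "k' \<in> D" "k' \<otimes> k = \<one>" using D_inverse k by blast
    then show ?thesis using S k D_closed unfolding left_ideal_def by metis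
  qed
qed

lemma skew_field_End_if_irreducible:
  assumes irr: "ore_irreducible R D f"
  shows "skew_field E"
proof -
  have "right_mult u \<in> Units E" if u: "u \<in> idealizer" "u \<notin> PIdl f" for u
  proof -
    have uc: "u \<in> carrier R" using u idealizer_closed by simp
    have "{r \<in> carrier R. r \<otimes> u \<in> PIdl f} \<subseteq> PIdl f"
      using maximal_left_ideal_if_irreducible[OF irr left_ideal_colon[OF f_closed uc]] u f_closed
      unfolding idealizer_def by auto
    then have inj: "\<And>r. r \<in> carrier R \<Longrightarrow> r \<otimes> u \<in> PIdl f \<Longrightarrow> r \<in> PIdl f" by blast
    let ?S = "{r \<in> carrier R. \<exists>p\<in>carrier R. r \<ominus> p \<otimes> u \<in> PIdl f}"
    have "f \<in> ?S" using f_closed uc cgenideal_self[OF f_closed] by (auto intro!: bexI[of _ \<zero>] simp: minus_eq)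
    moreover have "u \<in> ?S" using uc f_closed by (auto intro!: bexI[of _ \<one>] simp: minus_eq r_neg)
    ultimately have "\<one> \<in> ?S"
      using maximal_left_ideal_if_irreducible[OF irr left_ideal_plus_cyclic[OF f_closed uc]] u
      by blast
    then obtain p where "p \<in> carrier R" "\<one> \<ominus> p \<otimes> u \<in> PIdl f" by blast
    then show ?thesis using right_mult_Units u inj by blast
  qed
  moreover have "\<one>\<^bsub>E\<^esub> \<noteq> \<zero>\<^bsub>E\<^esub>"
    using right_mult_eq_zero_iff[OF one_in_idealizer] one_notin_cgenideal by (simp add: End_one)
  ultimately show ?thesis
    unfolding skew_field_def using ring_End right_mult_eq_zero_iff
    by (auto elim!: End_carrierE)
qed

lemma annihilator_iff: "r \<in> annihilator R f \<longleftrightarrow> r \<in> carrier R \<and> (\<forall>s\<in>carrier R. r \<otimes> s \<in> PIdl f)"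
  unfolding annihilator_def cgenideal_def by auto

text \<open>The remainder of \<open>c g\<close> on right division by \<open>g\<close> lies in the annihilator, a two-sided
  ideal, and has smaller degree than \<open>g\<close>, so it vanishes.\<close>

lemma annihilator_least_degree:
  assumes "bounded R f"
  obtains g where "g \<in> annihilator R f" "g \<noteq> \<zero>"
    and "\<And>h. h \<in> annihilator R f \<Longrightarrow> h \<noteq> \<zero> \<Longrightarrow> degree g \<le> degree h"
    and "\<And>c. c \<in> carrier R \<Longrightarrow> \<exists>q\<in>carrier R. c \<otimes> g = g \<otimes> q"
proof -
  let ?A = "annihilator R f"
  let ?P = "\<lambda>n. \<exists>g\<in>?A. g \<noteq> \<zero> \<and> degree g = n"
  have "\<zero> \<in> ?A" using annihilator_iff f_closed by simp
  then obtain g0 where "g0 \<in> ?A" "g0 \<noteq> \<zero>" using assms unfolding bounded_def by blast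
  then obtain g where g: "g \<in> ?A" "g \<noteq> \<zero>" "degree g = (LEAST n. ?P n)"
    using LeastI[where P = ?P, of "degree g0"] by blast
  have min: "degree g \<le> degree h" if "h \<in> ?A" "h \<noteq> \<zero>" for h
    unfolding g(3) by (rule Least_le) (use that in blast)
  have gc: "g \<in> carrier R" using g annihilator_iff by blast
  have "\<exists>q\<in>carrier R. c \<otimes> g = g \<otimes> q" if c: "c \<in> carrier R" for c
  proof -
    obtain q where q: "q \<in> carrier R" "c \<otimes> g \<ominus> g \<otimes> q \<in> deg_below (degree g)"
      using right_division gc g(2) c by blast
    have "c \<otimes> (g \<otimes> s) \<ominus> g \<otimes> (q \<otimes> s) \<in> PIdl f" if s: "s \<in> carrier R" for s
      using g(1) c q s f_closed cgenideal_minus cgenideal_lmult annihilator_iff by simp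
    then have "c \<otimes> g \<ominus> g \<otimes> q \<in> ?A"
      using c q gc by (simp add: annihilator_iff minus_eq l_distr l_minus m_assoc)
    then have "c \<otimes> g \<ominus> g \<otimes> q = \<zero>" using min degree_less q by fastforce
    then show ?thesis using q c gc by (auto simp: r_right_minus_eq)
  qed
  then show ?thesis using that g min by blast
qed

lemma exists_class_killed_by_right_factor:
  assumes bnd: "bounded R f" and ab: "a \<in> carrier R" "b \<in> carrier R" "f = a \<otimes> b" "b \<notin> D"
  shows "\<exists>v\<in>carrier R. b \<otimes> v \<in> PIdl f \<and> v \<notin> PIdl f"
proof -
  let ?A = "annihilator R f"
  obtain g where g: "g \<in> ?A" "g \<noteq> \<zero>"
    and min: "\<And>h. h \<in> ?A \<Longrightarrow> h \<noteq> \<zero> \<Longrightarrow> degree g \<le> degree h"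
    and normal: "\<And>c. c \<in> carrier R \<Longrightarrow> \<exists>q\<in>carrier R. c \<otimes> g = g \<otimes> q"
    using annihilator_least_degree[OF bnd] by blast
  have gc: "g \<in> carrier R" using g annihilator_iff by blast
  have "g \<otimes> \<one> \<in> PIdl f" using g annihilator_iff by blast
  then obtain t where t: "t \<in> carrier R" "g = t \<otimes> f" using gc unfolding cgenideal_def by auto
  define c where "c = t \<otimes> a"
  have cc: "c \<in> carrier R" and gcb: "g = c \<otimes> b" using t ab by (simp_all add: c_def m_assoc)
  have cnz: "c \<noteq> \<zero>" using gcb g(2) ab by auto
  obtain q where q: "q \<in> carrier R" "c \<otimes> g = g \<otimes> q" using normal cc by blast
  have "c \<otimes> (g \<ominus> b \<otimes> q) = \<zero>"
    using cc gc ab q gcb by (simp add: minus_eq r_distr r_minus m_assoc[symmetric] r_neg)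
  then have gbq: "g = b \<otimes> q" using degree_mult(1)[OF cc cnz, of "g \<ominus> b \<otimes> q"] gc ab q
    by (auto simp: r_right_minus_eq)
  have "q \<noteq> \<zero>" "b \<noteq> \<zero>" using gbq g(2) ab q by auto
  then have "degree g = degree b + degree q" using gbq degree_mult(2) ab q by simp
  moreover have "0 < degree b" using degree_eq_0_iff ab by auto
  ultimately have "degree q < degree g" by simp
  then have "q \<notin> ?A" using min \<open>q \<noteq> \<zero>\<close> by fastforce
  then obtain s where s: "s \<in> carrier R" "q \<otimes> s \<notin> PIdl f" using annihilator_iff q by blast
  have "b \<otimes> (q \<otimes> s) = g \<otimes> s" using gbq ab q s by (simp add: m_assoc)
  then have "b \<otimes> (q \<otimes> s) \<in> PIdl f" using g s annihilator_iff by simp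
  then show ?thesis using s q by blast
qed

lemma irreducible_if_skew_field_End:
  assumes bnd: "bounded R f" and E: "skew_field E"
  shows "ore_irreducible R D f"
  unfolding ore_irreducible_def
proof (intro ballI impI)
  fix a b assume ab: "a \<in> carrier R" "b \<in> carrier R" "f = a \<otimes> b"
  show "a \<in> D \<or> b \<in> D"
  proof (rule ccontr)
    assume "\<not> (a \<in> D \<or> b \<in> D)"
    then have nD: "a \<notin> D" "b \<notin> D" by auto
    obtain v where v: "v \<in> carrier R" "b \<otimes> v \<in> PIdl f" "v \<notin> PIdl f"
      using exists_class_killed_by_right_factor[OF bnd ab nD(2)] by blast
    have "f \<otimes> v \<in> PIdl f" using cgenideal_lmult[OF f_closed ab(1) v(2)] ab v by (simp add: m_assoc)
    then have "v \<in> idealizer" using v unfolding idealizer_def by simp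
    then have "b \<in> PIdl f" using cgenideal_cancel_if_skew_field_End[OF E] v ab by blast
    moreover have "a \<noteq> \<zero>" "b \<noteq> \<zero>" using nD by auto
    ultimately have "degree a + degree b \<le> degree b"
      using degree_f_le_cgenideal degree_mult(2) ab by metis
    then show False using degree_eq_0_iff ab nD by simp
  qed
qed

end

theorem mainTheorem7:
  fixes R :: "('a, 'b) ring_scheme" and D :: "'a set" and \<sigma> \<delta> :: "'a \<Rightarrow> 'a" and x f :: 'a
  assumes "is_ore_extension R D \<sigma> \<delta> x"
    and "is_automorphism R D \<sigma>"
    and "is_sigma_derivation R D \<sigma> \<delta>"
    and "f \<in> carrier R"
    and "ore_degree R D x f > 0"
    and "bounded R f"
  shows "ore_irreducible R D f \<longleftrightarrow> skew_field (End_ring R f)"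
proof -
  interpret ore_extension R D \<sigma> \<delta> x
    using assms(1-3) unfolding is_ore_extension_def ore_extension_def ore_extension_axioms_def
    by blast
  have "f \<notin> D" using ore_degree_D assms(5) by auto
  with assms(4) interpret ore_quotient R D \<sigma> \<delta> x f
    by unfold_locales
  show ?thesis
    using skew_field_End_if_irreducible irreducible_if_skew_field_End assms(6) by blast
qed

end
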